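(* Let $d\ge1$, $\Omega_s<0$, $\mathbf{\Omega}_a\in\mathbb{R}^{d\times d}$ skew-symmetric, $\mathbf{\Omega}=\Omega_s\mathbf{I}+\mathbf{\Omega}_a$, $D>0$, $\Sigma_0>0$, $\mathbf{m}_0\in\mathbb{R}^d$, $T>0$, $\epsilon\ge0$, $\lambda>0$, and let $\hat{\mathbf{D}}\in\mathbb{R}^{d\times d}$ be symmetric. Let $\mathbf{m}_t=e^{\mathbf{\Omega}t}\mathbf{m}_0$ and $\sigma_t^2=\Sigma_0e^{2\Omega_st}+D(e^{2\Omega_st}-1)/\Omega_s$ (so the isotropic Ornstein–Uhlenbeck process $d\mathbf{x}=\mathbf{\Omega}\mathbf{x}dt+\sqrt{2D}d\mathbf{W}$, $\mathbf{x}_0\sim\mathcal{N}(\mathbf{m}_0,\Sigma_0\mathbf{I})$, has marginals $\mathcal{N}(\mathbf{m}_t,\sigma_t^2\mathbf{I})$). Set $\mathbf{P}=\int_0^T\mathbf{m}_t\mathbf{m}_t^Tdt$, with eigendecomposition $\mathbf{P}=\sum_{i=1}^d\gamma_i\mathbf{u}_i\mathbf{u}_i^T$ ($\{\mathbf{u}_i\}$ orthonormal, $\gamma_1\ge\dots\ge\gamma_d\ge0$), and $$q=\int_0^T\frac{\sigma_t^4}{\sqrt{\epsilon^2/16+\sigma_t^4}}dt,\qquad r=\int_0^T\frac{\sigma_t^2}{\sqrt{\epsilon^2/16+\sigma_t^4}}dt.$$ Consider, for $\hat{\mathbf{\Omega}}\in\mathbb{R}^{d\times d}$, $$\mathcal{L}_\epsilon(\hat{\mathbf{\Omega}})=\mathrm{tr}\Big((\hat{\mathbf{\Omega}}-\mathbf{\Omega})^T(\hat{\mathbf{\Omega}}-\mathbf{\Omega})\mathbf{P}+\tfrac{q}{4}(\hat{\mathbf{\Omega}}+\hat{\mathbf{\Omega}}^T-2\Omega_s\mathbf{I})^2+r(\hat{\mathbf{\Omega}}+\hat{\mathbf{\Omega}}^T-2\Omega_s\mathbf{I})(\hat{\mathbf{D}}-D\mathbf{I})+\lambda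 T\hat{\mathbf{\Omega}}\hat{\mathbf{\Omega}}^T\Big).$$ Let $\tilde\lambda=\lambda T$, $\tilde q=q+\tilde\lambda$, $\Gamma_+=\tfrac12(\tilde\lambda^{-1}+\tilde q^{-1})$, $\omega_{ij}=\mathbf{u}_i^T\mathbf{\Omega}_a\mathbf{u}_j$ and $\eta_{ij}=\mathbf{u}_i^T\big(\Omega_s\mathbf{I}+r(\hat{\mathbf{D}}-D\mathbf{I})/\tilde\lambda\big)\mathbf{u}_j$. Then the minimum of $\mathcal{L}_\epsilon$ over $\mathbb{R}^{d\times d}$ is attained at $$\hat{\mathbf{\Omega}}=\mathbf{\Omega}-\sum_{i,j=1}^d\frac{\tilde\lambda\tilde q^{-1}\eta_{ij}(1+\gamma_i\tilde\lambda^{-1})+\omega_{ij}(1+\gamma_i\tilde q^{-1})}{\tilde q^{-1}\tilde\lambda^{-1}\gamma_i\gamma_j+\Gamma_+(\gamma_i+\gamma_j)+1}\,\mathbf{u}_i\mathbf{u}_j^T.$$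
   Context: $\mathcal{L}_\epsilon$ is the continuous-time limit of the regularized Sinkhorn-divergence (entropic regularization $\epsilon$) inference loss for a linear force $\hat{\mathbf{\Omega}}\mathbf{x}$ with assumed diffusion tensor $\hat{\mathbf{D}}$ in this isotropic setting; the claim concerns this explicit function only. *)

theory Defs
  imports "HOL-Analysis.Analysis"
begin

primrec mpow :: "real^'n^'n \<Rightarrow> nat \<Rightarrow> real^'n^'n" where
  "mpow A 0 = mat 1"
| "mpow A (Suc k) = A ** mpow A k"

definition mexp :: "real^'n^'n \<Rightarrow> real^'n^'n" where
  "mexp A = (\<Sum>k. (1 / fact k) *\<^sub>R mpow A k)"

definition outer :: "real^'n \<Rightarrow> real^'n \<Rightarrow> real^'n^'n" where
  "outer u v = (\<chi> i j. u $ i * v $ j)"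

definition loss_eps ::
  "real^'n^'n \<Rightarrow> real \<Rightarrow> real \<Rightarrow> real \<Rightarrow> real \<Rightarrow> real^'n^'n \<Rightarrow> real
   \<Rightarrow> real^'n^'n \<Rightarrow> real \<Rightarrow> real^'n^'n \<Rightarrow> real" where
  "loss_eps P q r lam T Om Oms Dh D Omh =
     trace (transpose (Omh - Om) ** (Omh - Om) ** P
       + (q / 4) *\<^sub>R ((Omh + transpose Omh - (2 * Oms) *\<^sub>R mat 1)
                         ** (Omh + transpose Omh - (2 * Oms) *\<^sub>R mat 1))
       + r *\<^sub>R ((Omh + transpose Omh - (2 * Oms) *\<^sub>R mat 1) ** (Dh - D *\<^sub>R mat 1))
       + (lam * T) *\<^sub>R (Omh ** transpose Omh))"

end

theory Submission
  imports Defs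
begin

text \<open>In terms of the Frobenius inner product the loss is quadratic,
  L(\<Omega>' + Y) = L(\<Omega>') + \<langle>\<nabla>L(\<Omega>'), Y\<rangle> + \<langle>Y, Y P\<rangle> + q/4 |Y + Y^T|^2 + \<lambda>T |Y|^2,
  and the last three terms are nonnegative since P is positive semidefinite, so every critical
  point is a global minimiser. In the orthonormal eigenbasis of P, the (i, j) entry of the
  gradient at \<Omega> - \<Sigma> c_ij u_i u_j^T is
  2\<lambda>T (\<eta>_ij + \<omega>_ij) - 2 (\<gamma>_j + \<lambda>T) c_ij - q (c_ij + c_ji);
  since \<eta> is symmetric and \<omega> antisymmetric, the entries (i, j) and (j, i) form a 2 \<times> 2 linear
  system whose solution is the stated coefficient.\<close>

lemma transpose_add: "transpose (A + B) = transpose A + transpose (B :: 'a::semiring_1^'n^'m)"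
  by (simp add: transpose_def vec_eq_iff)

lemma transpose_diff: "transpose (A - B) = transpose A - transpose (B :: 'a::ring_1^'n^'m)"
  by (simp add: transpose_def vec_eq_iff)

lemma transpose_sum: "transpose (sum f S) = (\<Sum>i\<in>S. transpose (f i :: 'a::semiring_1^'n^'m))"
  by (simp add: transpose_def vec_eq_iff)

lemma matrix_add_rdistrib: "(A + B) ** C = A ** C + B ** (C :: 'a::semiring_1^'p^'n)"
  by (simp add: matrix_matrix_mult_def vec_eq_iff distrib_right sum.distrib)

lemma trace_scaleR: "trace (c *\<^sub>R (A :: real^'n^'n)) = c * trace A"
  by (simp add: trace_def sum_distrib_left)

lemma inner_matrix_eq_trace: "(X :: real^'n^'m) \<bullet> Y = trace (transpose X ** Y)"
  unfolding trace_def matrix_matrix_mult_def transpose_def inner_vec_def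
  by simp (rule sum.swap)

lemma trace_matrix_mult_eq_inner: "trace ((A :: real^'n^'m) ** B) = transpose A \<bullet> B"
  by (simp add: inner_matrix_eq_trace)

lemma inner_transpose_right: "(X :: real^'n^'m) \<bullet> transpose Y = transpose X \<bullet> Y"
  unfolding inner_vec_def transpose_def by simp (rule sum.swap)

lemma inner_transpose_transpose: "transpose (X :: real^'n^'m) \<bullet> transpose Y = X \<bullet> Y"
  by (simp add: inner_transpose_right)

lemma inner_matrix_mult_right_factor: "(X :: real^'n^'m) \<bullet> (Y ** P) = (X ** transpose P) \<bullet> Y"
proof -
  have "trace (transpose X ** (Y ** P)) = trace (P ** transpose X ** Y)"
    by (metis matrix_mul_assoc trace_mul_sym)
  then show ?thesis
    by (simp add: inner_matrix_eq_trace matrix_transpose_mul)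
qed

lemma inner_matrix_mult_left_factor: "(X :: real^'n^'m) \<bullet> (Y ** Z) = (transpose Y ** X) \<bullet> Z"
  by (simp add: inner_matrix_eq_trace matrix_transpose_mul matrix_mul_assoc)

lemma inner_symmetric_add_transpose:
  assumes "transpose S = S"
  shows "S \<bullet> (Y + transpose Y) = 2 * (S \<bullet> (Y :: real^'n^'n))"
  using assms by (simp add: inner_add_right inner_transpose_right)

lemma inner_add_self: "(x + y) \<bullet> (x + y) = x \<bullet> x + 2 * (x \<bullet> y) + y \<bullet> (y :: 'a::real_inner)"
  by (simp add: inner_add_left inner_add_right inner_commute[of y x])

lemma inner_outer_right: "(X :: real^'n^'n) \<bullet> outer a b = a \<bullet> (X *v b)"
  by (simp add: inner_vec_def outer_def matrix_vector_mult_def sum_distrib_left algebra_simps)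

lemma outer_scaleR_right: "outer a (c *\<^sub>R b) = c *\<^sub>R outer a b"
  by (simp add: outer_def vec_eq_iff ac_simps)

lemma inner_mat_1_outer: "mat 1 \<bullet> outer a b = a \<bullet> b"
  by (simp add: inner_outer_right)

lemma transpose_outer: "transpose (outer a b) = outer b a"
  by (simp add: outer_def transpose_def vec_eq_iff)

lemma outer_mult_vec: "outer a b *v x = (b \<bullet> x) *\<^sub>R a"
  by (simp add: outer_def matrix_vector_mult_def inner_vec_def vec_eq_iff sum_distrib_left
      mult.commute mult.left_commute)

lemma inner_transpose_outer: "transpose (X :: real^'n^'n) \<bullet> outer a b = X \<bullet> outer b a"
  by (simp add: inner_outer_right inner_commute[of a] dot_lmul_matrix[symmetric])

lemma inner_matrix_mult_outer:
  "((X :: real^'n^'n) ** Y) \<bullet> outer a b = X \<bullet> outer a (Y *v b)"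
  by (simp add: inner_outer_right matrix_vector_mul_assoc)

lemma inner_outer_outer: "outer a b \<bullet> outer c d = (a \<bullet> c) * (b \<bullet> d)"
  by (simp add: inner_outer_right outer_mult_vec inner_commute)

definition orthonormal_on :: "'i set \<Rightarrow> ('i \<Rightarrow> 'a::real_inner) \<Rightarrow> bool" where
  "orthonormal_on I u \<longleftrightarrow> (\<forall>i\<in>I. \<forall>j\<in>I. u i \<bullet> u j = (if i = j then 1 else 0))"

lemma orthonormal_family_span_UNIV:
  fixes u :: "'i \<Rightarrow> real^'n"
  assumes orthonormal: "orthonormal_on I u"
    and card_I: "card I = CARD('n)"
  shows "span (u ` I) = UNIV"
proof -
  have "inj_on u I"
    using orthonormal unfolding orthonormal_on_def by (metis inj_onI zero_neq_one)
  then have card_image: "card (u ` I) = CARD('n)"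
    using card_I by (simp add: card_image)
  have "pairwise orthogonal (u ` I)"
    using orthonormal by (auto simp: orthonormal_on_def pairwise_def orthogonal_def)
  moreover have "0 \<notin> u ` I"
    using orthonormal unfolding orthonormal_on_def by force
  ultimately have "independent (u ` I)"
    by (rule pairwise_orthogonal_independent)
  then have "UNIV \<subseteq> span (u ` I)"
    using card_image by (intro card_ge_dim_independent) (simp_all add: dim_UNIV)
  then show ?thesis
    by auto
qed

lemma matrix_eq_0_if_orthonormal_entries_eq_0:
  fixes u :: "'i \<Rightarrow> real^'n" and M :: "real^'n^'n"
  assumes orthonormal: "orthonormal_on I u"
    and card_I: "card I = CARD('n)"
    and entries: "\<forall>k\<in>I. \<forall>l\<in>I. M \<bullet> outer (u k) (u l) = 0"
  shows "M = 0"
proof -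
  have span: "span (u ` I) = UNIV"
    using orthonormal card_I by (rule orthonormal_family_span_UNIV)
  have "M *v u l = 0" if "l \<in> I" for l
    using entries that by (intro vector_eq_dot_span[of _ "u ` I"]) (auto simp: span inner_outer_right)
  then have "M *v x = 0" for x
    using linear_eq_0_on_span[OF matrix_vector_mul_linear, of "u ` I" M x] span by auto
  then show ?thesis
    by (simp add: matrix_eq)
qed

lemma sum_orthonormal_delta:
  fixes u :: "'i \<Rightarrow> real^'n" and f :: "'i \<Rightarrow> 'a::real_vector"
  assumes orthonormal: "orthonormal_on I u"
    and "finite I" "l \<in> I"
  shows "(\<Sum>j\<in>I. (u j \<bullet> u l) *\<^sub>R f j) = f l"
proof -
  have "(\<Sum>j\<in>I. (u j \<bullet> u l) *\<^sub>R f j) = (\<Sum>j\<in>I. if j = l then f j else 0)"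
    by (intro sum.cong refl) (use orthonormal assms(3) in \<open>auto simp: orthonormal_on_def\<close>)
  then show ?thesis
    using assms(2,3) by simp
qed

lemma inner_sum_outer_orthonormal:
  fixes u :: "'i \<Rightarrow> real^'n"
  assumes orthonormal: "orthonormal_on I u"
    and "finite I" "k \<in> I" "l \<in> I"
  shows "(\<Sum>i\<in>I. \<Sum>j\<in>I. c i j *\<^sub>R outer (u i) (u j)) \<bullet> outer (u k) (u l) = c k l"
proof -
  have "(\<Sum>i\<in>I. \<Sum>j\<in>I. c i j *\<^sub>R outer (u i) (u j)) \<bullet> outer (u k) (u l)
      = (\<Sum>i\<in>I. (u i \<bullet> u k) *\<^sub>R (\<Sum>j\<in>I. (u j \<bullet> u l) *\<^sub>R c i j))"
    unfolding inner_sum_left inner_scaleR_left inner_outer_outer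
    by (simp add: sum_distrib_left ac_simps)
  also have "\<dots> = c k l"
    by (simp only: sum_orthonormal_delta[OF orthonormal assms(2,4)]
        sum_orthonormal_delta[OF orthonormal assms(2,3)])
  finally show ?thesis .
qed

lemma matrix_vector_mult_sum_left: "sum f S *v x = (\<Sum>i\<in>S. f i *v (x :: real^'n))"
  by (induct S rule: infinite_finite_induct) (simp_all add: matrix_vector_mult_add_rdistrib)

lemma sum_outer_mult_vec_orthonormal:
  fixes u :: "'i \<Rightarrow> real^'n"
  assumes orthonormal: "orthonormal_on I u"
    and "finite I" "l \<in> I"
  shows "(\<Sum>i\<in>I. g i *\<^sub>R outer (u i) (u i)) *v u l = g l *\<^sub>R u l"
  unfolding matrix_vector_mult_sum_left scaleR_matrix_vector_assoc[symmetric] outer_mult_vec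
  using sum_orthonormal_delta[OF assms, of "\<lambda>i. g i *\<^sub>R u i"]
  by (simp add: inner_commute mult.commute)

lemma transpose_sum_outer:
  "transpose (\<Sum>i\<in>I. g i *\<^sub>R outer (u i) (u i)) = (\<Sum>i\<in>I. g i *\<^sub>R outer (u i) (u i))"
  by (simp add: transpose_sum transpose_scalar transpose_outer)

lemma sum_outer_psd:
  assumes "\<forall>i\<in>I. g i \<ge> 0"
  shows "0 \<le> (Y :: real^'n^'n) \<bullet> (Y ** (\<Sum>i\<in>I. g i *\<^sub>R outer (u i) (u i)))"
proof -
  have "Y \<bullet> (Y ** (\<Sum>i\<in>I. g i *\<^sub>R outer (u i) (u i)))
      = (\<Sum>i\<in>I. g i * ((Y *v u i) \<bullet> (Y *v u i)))"
    unfolding inner_matrix_mult_left_factor inner_sum_right inner_scaleR_right inner_outer_right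
    by (simp add: matrix_vector_mul_assoc[symmetric] inner_commute[of "u _"]
        dot_lmul_matrix[symmetric])
  also have "\<dots> \<ge> 0"
    using assms by (simp add: sum_nonneg)
  finally show ?thesis .
qed

definition shifted_symm_part :: "real \<Rightarrow> real^'n^'n \<Rightarrow> real^'n^'n" where
  "shifted_symm_part Oms A = A + transpose A - (2 * Oms) *\<^sub>R mat 1"

lemma transpose_shifted_symm_part: "transpose (shifted_symm_part Oms A) = shifted_symm_part Oms A"
  unfolding shifted_symm_part_def
  by (simp add: transpose_add transpose_diff transpose_scalar add.commute)

lemma shifted_symm_part_add:
  "shifted_symm_part Oms (A + B) = shifted_symm_part Oms A + (B + transpose B)"
  unfolding shifted_symm_part_def by (simp add: transpose_add algebra_simps)

lemma loss_eps_as_inner: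
  "loss_eps P q r lam T Om Oms Dh D Omh =
    (Omh - Om) \<bullet> ((Omh - Om) ** P)
      + q / 4 * (shifted_symm_part Oms Omh \<bullet> shifted_symm_part Oms Omh)
      + r * (shifted_symm_part Oms Omh \<bullet> (Dh - D *\<^sub>R mat 1)) + lam * T * (Omh \<bullet> Omh)"
proof -
  let ?S = "shifted_symm_part Oms Omh"
  have "loss_eps P q r lam T Om Oms Dh D Omh =
      trace (transpose (Omh - Om) ** ((Omh - Om) ** P)) + q / 4 * trace (?S ** ?S)
        + r * trace (?S ** (Dh - D *\<^sub>R mat 1)) + lam * T * trace (Omh ** transpose Omh)"
    unfolding loss_eps_def shifted_symm_part_def trace_add trace_scaleR matrix_mul_assoc
    by (rule refl)
  then show ?thesis
    unfolding trace_matrix_mult_eq_inner transpose_transpose transpose_shifted_symm_part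
      inner_transpose_transpose .
qed

definition loss_eps_grad ::
  "real^'n^'n \<Rightarrow> real \<Rightarrow> real \<Rightarrow> real \<Rightarrow> real \<Rightarrow> real^'n^'n \<Rightarrow> real
   \<Rightarrow> real^'n^'n \<Rightarrow> real \<Rightarrow> real^'n^'n \<Rightarrow> real^'n^'n" where
  "loss_eps_grad P q r lam T Om Oms Dh D Omh =
     2 *\<^sub>R ((Omh - Om) ** P) + q *\<^sub>R shifted_symm_part Oms Omh
       + (2 * r) *\<^sub>R (Dh - D *\<^sub>R mat 1) + (2 * (lam * T)) *\<^sub>R Omh"

lemma loss_eps_add:
  assumes P_sym: "transpose P = P" and Dh_sym: "transpose Dh = Dh"
  shows "loss_eps P q r lam T Om Oms Dh D (Omh + Y) =
    loss_eps P q r lam T Om Oms Dh D Omh + loss_eps_grad P q r lam T Om Oms Dh D Omh \<bullet> Y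
      + (Y \<bullet> (Y ** P) + q / 4 * ((Y + transpose Y) \<bullet> (Y + transpose Y)) + lam * T * (Y \<bullet> Y))"
proof -
  let ?A = "Omh - Om" and ?S = "shifted_symm_part Oms Omh" and ?E = "Dh - D *\<^sub>R mat 1"
    and ?W = "Y + transpose Y"
  have "transpose ?E = ?E"
    using Dh_sym by (simp add: transpose_diff transpose_scalar)
  then have E_W: "?W \<bullet> ?E = 2 * (?E \<bullet> Y)"
    by (metis inner_commute inner_symmetric_add_transpose)
  have S_W: "?S \<bullet> ?W = 2 * (?S \<bullet> Y)"
    by (simp add: inner_symmetric_add_transpose transpose_shifted_symm_part)
  have A_Y: "?A \<bullet> (Y ** P) = (?A ** P) \<bullet> Y"
    using inner_matrix_mult_right_factor[of ?A Y P] P_sym by simp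
  have quadratic: "(?A + Y) \<bullet> ((?A + Y) ** P) = ?A \<bullet> (?A ** P) + 2 * ((?A ** P) \<bullet> Y) + Y \<bullet> (Y ** P)"
    unfolding matrix_add_rdistrib inner_add_left inner_add_right A_Y
    using inner_commute[of Y "?A ** P"] by simp
  have symm_square: "(?S + ?W) \<bullet> (?S + ?W) = ?S \<bullet> ?S + 4 * (?S \<bullet> Y) + ?W \<bullet> ?W"
    unfolding inner_add_self[of ?S ?W] S_W by simp
  have symm_linear: "(?S + ?W) \<bullet> ?E = ?S \<bullet> ?E + 2 * (?E \<bullet> Y)"
    unfolding inner_add_left[of ?S ?W] E_W ..
  have grad: "loss_eps_grad P q r lam T Om Oms Dh D Omh \<bullet> Y
      = 2 * ((?A ** P) \<bullet> Y) + q * (?S \<bullet> Y) + 2 * r * (?E \<bullet> Y) + 2 * (lam * T) * (Omh \<bullet> Y)"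
    unfolding loss_eps_grad_def inner_add_left inner_scaleR_left by simp
  have shift: "Omh + Y - Om = ?A + Y"
    by simp
  show ?thesis
    unfolding loss_eps_as_inner shifted_symm_part_add shift quadratic symm_square symm_linear
      inner_add_self[of Omh Y] grad
    by (simp add: algebra_simps)
qed

lemma loss_eps_minimal_at_critical_point:
  fixes P :: "real^'n^'n"
  assumes P_sym: "transpose P = P" and P_psd: "\<And>Y :: real^'n^'n. 0 \<le> Y \<bullet> (Y ** P)"
    and q_nonneg: "q \<ge> 0" and lamT_nonneg: "lam * T \<ge> 0" and Dh_sym: "transpose Dh = Dh"
    and critical: "loss_eps_grad P q r lam T Om Oms Dh D Omh = 0"
  shows "loss_eps P q r lam T Om Oms Dh D Omh \<le> loss_eps P q r lam T Om Oms Dh D X"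
proof -
  let ?Y = "X - Omh"
  have "loss_eps P q r lam T Om Oms Dh D X = loss_eps P q r lam T Om Oms Dh D Omh
      + (?Y \<bullet> (?Y ** P) + q / 4 * ((?Y + transpose ?Y) \<bullet> (?Y + transpose ?Y)) + lam * T * (?Y \<bullet> ?Y))"
    using loss_eps_add[OF P_sym Dh_sym, of q r lam T Om Oms D Omh ?Y] critical by simp
  moreover have "0 \<le> q / 4 * ((?Y + transpose ?Y) \<bullet> (?Y + transpose ?Y))"
    using q_nonneg by simp
  moreover have "0 \<le> lam * T * (?Y \<bullet> ?Y)"
    using lamT_nonneg by simp
  ultimately show ?thesis
    using P_psd[of ?Y] by linarith
qed

definition minimizer_coeff :: "real \<Rightarrow> real \<Rightarrow> real \<Rightarrow> real \<Rightarrow> real \<Rightarrow> real \<Rightarrow> real" where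
  "minimizer_coeff lt q gi gj e w =
     (let qt = q + lt; Gp = (inverse lt + inverse qt) / 2
      in (lt * inverse qt * e * (1 + gi * inverse lt) + w * (1 + gi * inverse qt))
         / (inverse qt * inverse lt * gi * gj + Gp * (gi + gj) + 1))"

lemma minimizer_coeff_closed_form:
  fixes lt q gi gj e w :: real
  assumes "lt > 0" "q \<ge> 0" "gi \<ge> 0" "gj \<ge> 0"
  shows "minimizer_coeff lt q gi gj e w =
    lt * (e * (lt + gi) + w * (q + lt + gi)) / (gi * gj + (q + 2 * lt) * (gi + gj) / 2 + (q + lt) * lt)"
proof -
  define qt where "qt = q + lt"
  define N where "N = gi * gj + (qt + lt) * (gi + gj) / 2 + qt * lt"
  have "qt > 0"
    unfolding qt_def using assms by simp
  have "N > 0"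
    unfolding N_def using assms \<open>qt > 0\<close> by (simp add: add_nonneg_pos)
  have num: "lt * inverse qt * e * (1 + gi * inverse lt) + w * (1 + gi * inverse qt)
      = (e * (lt + gi) + w * (qt + gi)) / qt"
    using assms \<open>qt > 0\<close> by (simp add: field_simps)
  have den: "inverse qt * inverse lt * gi * gj + (inverse lt + inverse qt) / 2 * (gi + gj) + 1
      = N / (qt * lt)"
    unfolding N_def using assms \<open>qt > 0\<close> by (simp add: field_simps)
  have N_eq: "gi * gj + (q + 2 * lt) * (gi + gj) / 2 + (q + lt) * lt = N"
    unfolding N_def qt_def by (simp add: algebra_simps)
  have "minimizer_coeff lt q gi gj e w = ((e * (lt + gi) + w * (qt + gi)) / qt) / (N / (qt * lt))"
    unfolding minimizer_coeff_def Let_def qt_def[symmetric] num den ..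
  also have "\<dots> = lt * (e * (lt + gi) + w * (qt + gi)) / N"
    using assms \<open>qt > 0\<close> \<open>N > 0\<close> by (simp add: field_simps)
  finally show ?thesis
    unfolding N_eq by (simp add: qt_def)
qed

text \<open>The stationarity condition at the entries (i, j) and (j, i) in the eigenbasis of P,
  where e = \<eta>_ij is symmetric and w = \<omega>_ij antisymmetric in (i, j).\<close>
lemma minimizer_coeff_solves:
  fixes lt q gi gj e w :: real
  assumes "lt > 0" "q \<ge> 0" "gi \<ge> 0" "gj \<ge> 0"
  shows "2 * (gj + lt) * minimizer_coeff lt q gi gj e w
           + q * (minimizer_coeff lt q gi gj e w + minimizer_coeff lt q gj gi e (- w))
         = 2 * lt * (e + w)"
proof -
  define N where "N = gi * gj + (q + 2 * lt) * (gi + gj) / 2 + (q + lt) * lt"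
  define X where "X = lt * (e * (lt + gi) + w * (q + lt + gi))"
  define Y where "Y = lt * (e * (lt + gj) + - w * (q + lt + gj))"
  have "N > 0"
    unfolding N_def using assms by (simp add: add_nonneg_pos)
  have N_sym: "gj * gi + (q + 2 * lt) * (gj + gi) / 2 + (q + lt) * lt = N"
    unfolding N_def by (simp add: algebra_simps)
  have "2 * (gj + lt) * (X / N) + q * (X / N + Y / N) = (2 * (gj + lt) * X + q * (X + Y)) / N"
    by (simp add: add_divide_distrib algebra_simps)
  also have "2 * (gj + lt) * X + q * (X + Y) = 2 * lt * (e + w) * N"
    unfolding N_def X_def Y_def by (simp add: algebra_simps)
  finally show ?thesis
    unfolding minimizer_coeff_closed_form[OF assms] minimizer_coeff_closed_form[OF assms(1,2,4,3)]
      N_sym N_def[symmetric] X_def[symmetric] Y_def[symmetric]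
    using \<open>N > 0\<close> by simp
qed

lemma loss_eps_grad_entry:
  fixes P Oma C :: "real^'n^'n" and Oms :: real
  assumes skew: "transpose Oma = - Oma" and eigen: "P *v b = g *\<^sub>R b"
  defines "Om \<equiv> Oms *\<^sub>R mat 1 + Oma"
  shows "loss_eps_grad P q r lam T Om Oms Dh D (Om - C) \<bullet> outer a b
    = 2 * (lam * T) * (Oms * (a \<bullet> b) + Oma \<bullet> outer a b) + 2 * r * ((Dh - D *\<^sub>R mat 1) \<bullet> outer a b)
      - (2 * (g + lam * T) * (C \<bullet> outer a b) + q * (C \<bullet> outer a b + C \<bullet> outer b a))"
proof -
  have Oma_transposed: "Oma \<bullet> outer b a = - (Oma \<bullet> outer a b)"
    using inner_transpose_outer[of Oma a b] skew by simp
  show ?thesis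
    unfolding loss_eps_grad_def shifted_symm_part_def Om_def inner_add_left inner_diff_left
      inner_scaleR_left inner_matrix_mult_outer eigen outer_scaleR_right inner_scaleR_right
      inner_transpose_outer inner_mat_1_outer
    by (simp add: Oma_transposed inner_commute[of b a] algebra_simps)
qed

lemma loss_eps_grad_vanishes_in_eigenbasis:
  fixes u :: "'i \<Rightarrow> real^'n" and Oma Dh P :: "real^'n^'n" and Oms r D lam T :: real
  assumes orthonormal: "orthonormal_on I u"
    and card_I: "card I = CARD('n)"
    and gam_nonneg: "\<forall>i\<in>I. gam i \<ge> 0"
    and P_eq: "P = (\<Sum>i\<in>I. gam i *\<^sub>R outer (u i) (u i))"
    and skew: "transpose Oma = - Oma" and Dh_sym: "transpose Dh = Dh"
    and q_nonneg: "q \<ge> 0" and lamT_pos: "lam * T > 0"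
  defines "Om \<equiv> Oms *\<^sub>R mat 1 + Oma"
    and "eta \<equiv> \<lambda>i j. u i \<bullet> ((Oms *\<^sub>R mat 1 + (r / (lam * T)) *\<^sub>R (Dh - D *\<^sub>R mat 1)) *v u j)"
    and "omega \<equiv> \<lambda>i j. u i \<bullet> (Oma *v u j)"
  shows "loss_eps_grad P q r lam T Om Oms Dh D
           (Om - (\<Sum>i\<in>I. \<Sum>j\<in>I. minimizer_coeff (lam * T) q (gam i) (gam j) (eta i j) (omega i j)
                                   *\<^sub>R outer (u i) (u j))) = 0"
proof -
  let ?lt = "lam * T" and ?E = "Dh - D *\<^sub>R mat 1"
  define c where "c i j = minimizer_coeff ?lt q (gam i) (gam j) (eta i j) (omega i j)" for i j
  define C where "C = (\<Sum>i\<in>I. \<Sum>j\<in>I. c i j *\<^sub>R outer (u i) (u j))"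
  have "finite I"
    using card_I by (simp add: card_ge_0_finite)
  have omega_entry: "Oma \<bullet> outer (u i) (u j) = omega i j" for i j
    unfolding omega_def by (rule inner_outer_right)
  have omega_antisym: "omega j i = - omega i j" for i j
    using inner_transpose_outer[of Oma "u i" "u j"] skew by (simp add: omega_entry)
  have eta_entry:
    "?lt * eta i j = ?lt * Oms * (u i \<bullet> u j) + r * (?E \<bullet> outer (u i) (u j))" for i j
    unfolding eta_def inner_outer_right using lamT_pos
    by (auto simp: matrix_vector_mult_add_rdistrib scaleR_matrix_vector_assoc[symmetric]
        algebra_simps)
  have eta_sym: "eta j i = eta i j" for i j
  proof -
    have "transpose ?E = ?E"
      using Dh_sym by (simp add: transpose_diff transpose_scalar)
    then have "?lt * eta j i = ?lt * eta i j"
      using eta_entry[of i j] eta_entry[of j i] inner_transpose_outer[of ?E]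
      by (simp add: inner_commute)
    then show ?thesis
      using lamT_pos by auto
  qed
  have grad_entry: "loss_eps_grad P q r lam T Om Oms Dh D (Om - C) \<bullet> outer (u k) (u l) = 0"
    if k: "k \<in> I" and l: "l \<in> I" for k l
  proof -
    have C_entry: "C \<bullet> outer (u i) (u j) = c i j" if "i \<in> I" "j \<in> I" for i j
      unfolding C_def using orthonormal \<open>finite I\<close> that by (rule inner_sum_outer_orthonormal)
    have P_u: "P *v u l = gam l *\<^sub>R u l"
      unfolding P_eq using orthonormal \<open>finite I\<close> l by (rule sum_outer_mult_vec_orthonormal)
    have "loss_eps_grad P q r lam T Om Oms Dh D (Om - C) \<bullet> outer (u k) (u l)
        = 2 * (?lt * eta k l + ?lt * omega k l) - (2 * (gam l + ?lt) * c k l + q * (c k l + c l k))"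
      unfolding Om_def loss_eps_grad_entry[OF skew P_u] omega_entry C_entry[OF k l] C_entry[OF l k]
      using eta_entry[of k l] by (simp add: algebra_simps)
    also have "\<dots> = 0"
      using minimizer_coeff_solves[OF lamT_pos q_nonneg, of "gam k" "gam l" "eta k l" "omega k l"]
        gam_nonneg k l
      unfolding c_def eta_sym[of k l] omega_antisym[of k l] by (simp add: algebra_simps)
    finally show ?thesis .
  qed
  show ?thesis
    unfolding C_def[symmetric] c_def[symmetric]
    using matrix_eq_0_if_orthonormal_entries_eq_0[OF orthonormal card_I] grad_entry by blast
qed

lemma loss_eps_minimizer_in_eigenbasis:
  fixes u :: "'i \<Rightarrow> real^'n" and Oma Dh P :: "real^'n^'n" and Oms r D lam T :: real
  assumes "orthonormal_on I u" and "card I = CARD('n)"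
    and gam_nonneg: "\<forall>i\<in>I. gam i \<ge> 0"
    and P_eq: "P = (\<Sum>i\<in>I. gam i *\<^sub>R outer (u i) (u i))"
    and "transpose Oma = - Oma" and Dh_sym: "transpose Dh = Dh"
    and q_nonneg: "q \<ge> 0" and lamT_pos: "lam * T > 0"
  defines "Om \<equiv> Oms *\<^sub>R mat 1 + Oma"
    and "eta \<equiv> \<lambda>i j. u i \<bullet> ((Oms *\<^sub>R mat 1 + (r / (lam * T)) *\<^sub>R (Dh - D *\<^sub>R mat 1)) *v u j)"
    and "omega \<equiv> \<lambda>i j. u i \<bullet> (Oma *v u j)"
  shows "loss_eps P q r lam T Om Oms Dh D
           (Om - (\<Sum>i\<in>I. \<Sum>j\<in>I. minimizer_coeff (lam * T) q (gam i) (gam j) (eta i j) (omega i j)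
                                   *\<^sub>R outer (u i) (u j)))
         \<le> loss_eps P q r lam T Om Oms Dh D X"
  using loss_eps_grad_vanishes_in_eigenbasis[OF assms(1-8)] lamT_pos q_nonneg Dh_sym gam_nonneg
  unfolding Om_def eta_def omega_def P_eq
  by (intro loss_eps_minimal_at_critical_point transpose_sum_outer sum_outer_psd) auto

lemma integral_nonneg_without_integrability:
  fixes f :: "'n::euclidean_space \<Rightarrow> real"
  assumes "\<And>x. x \<in> S \<Longrightarrow> 0 \<le> f x"
  shows "0 \<le> integral S f"
  by (cases "f integrable_on S") (simp_all add: integral_nonneg assms not_integrable_integral)

theorem mainTheorem2:
  fixes Oms D Sig0 T eps lam :: real
    and Oma Dh :: "real^'d^'d"
    and m0 :: "real^'d"
    and u :: "nat \<Rightarrow> real^'d"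
    and gam :: "nat \<Rightarrow> real"
  assumes Oms_neg: "Oms < 0"
    and skew: "transpose Oma = - Oma"
    and D_pos: "D > 0"
    and Sig0_pos: "Sig0 > 0"
    and T_pos: "T > 0"
    and eps_nonneg: "eps \<ge> 0"
    and lam_pos: "lam > 0"
    and Dh_sym: "transpose Dh = Dh"
    and orthonormal: "\<forall>i\<in>{1..CARD('d)}. \<forall>j\<in>{1..CARD('d)}.
                        u i \<bullet> u j = (if i = j then 1 else 0)"
    and gam_sorted: "\<forall>i\<in>{1..CARD('d)}. \<forall>j\<in>{1..CARD('d)}. i \<le> j \<longrightarrow> gam j \<le> gam i"
    and gam_nonneg: "\<forall>i\<in>{1..CARD('d)}. gam i \<ge> 0"
    and eig: "integral {0..T} (\<lambda>t. outer (mexp (t *\<^sub>R (Oms *\<^sub>R mat 1 + Oma)) *v m0)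
                                        (mexp (t *\<^sub>R (Oms *\<^sub>R mat 1 + Oma)) *v m0))
              = (\<Sum>i=1..CARD('d). gam i *\<^sub>R outer (u i) (u i))"
  shows
    "let Om = Oms *\<^sub>R mat 1 + Oma;
         sig2 = (\<lambda>t. Sig0 * exp (2 * Oms * t) + D * (exp (2 * Oms * t) - 1) / Oms);
         P = integral {0..T} (\<lambda>t. outer (mexp (t *\<^sub>R Om) *v m0) (mexp (t *\<^sub>R Om) *v m0));
         q = integral {0..T} (\<lambda>t. (sig2 t)\<^sup>2 / sqrt (eps\<^sup>2 / 16 + (sig2 t)\<^sup>2));
         r = integral {0..T} (\<lambda>t. sig2 t / sqrt (eps\<^sup>2 / 16 + (sig2 t)\<^sup>2));
         lt = lam * T;
         qt = q + lt;
         Gp = (inverse lt + inverse qt) / 2;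
         w = (\<lambda>i j. u i \<bullet> (Oma *v u j));
         et = (\<lambda>i j. u i \<bullet> ((Oms *\<^sub>R mat 1 + (r / lt) *\<^sub>R (Dh - D *\<^sub>R mat 1)) *v u j));
         Omh = Om - (\<Sum>i=1..CARD('d). \<Sum>j=1..CARD('d).
                 ((lt * inverse qt * et i j * (1 + gam i * inverse lt)
                   + w i j * (1 + gam i * inverse qt))
                  / (inverse qt * inverse lt * gam i * gam j + Gp * (gam i + gam j) + 1))
                 *\<^sub>R outer (u i) (u j))
     in \<forall>X :: real^'d^'d. loss_eps P q r lam T Om Oms Dh D Omh \<le> loss_eps P q r lam T Om Oms Dh D X"
proof -
  define sig2 where "sig2 = (\<lambda>t. Sig0 * exp (2 * Oms * t) + D * (exp (2 * Oms * t) - 1) / Oms)"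
  define q where "q = integral {0..T} (\<lambda>t. (sig2 t)\<^sup>2 / sqrt (eps\<^sup>2 / 16 + (sig2 t)\<^sup>2))"
  define r where "r = integral {0..T} (\<lambda>t. sig2 t / sqrt (eps\<^sup>2 / 16 + (sig2 t)\<^sup>2))"
  have q_nonneg: "q \<ge> 0"
    unfolding q_def by (rule integral_nonneg_without_integrability) simp
  have lamT_pos: "lam * T > 0"
    using lam_pos T_pos by simp
  have orthonormal_u: "orthonormal_on {1..CARD('d)} u"
    using orthonormal unfolding orthonormal_on_def .
  have card_I: "card {1..CARD('d)} = CARD('d)"
    by simp
  show ?thesis
    using loss_eps_minimizer_in_eigenbasis[OF orthonormal_u card_I gam_nonneg eig skew Dh_sym
        q_nonneg lamT_pos, where Oms = Oms and r = r and D = D]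
    unfolding Let_def minimizer_coeff_def q_def r_def sig2_def by blast
qed

end
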